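(* For every $n\in\mathbb N$, $2n\,\theta(s_n^2)=4n-2$. In particular $\lim_{n\to\infty}\theta(s_n^2)=2$.
   Context: $F$ is Thompson's group: the group of piecewise linear homeomorphisms of $[0,1]$ with finitely many dyadic breakpoints and slopes powers of $2$, with product $(fg)(t)=g(f(t))$; its standard generators are $x_0$ ($x_0(t)=2t$ on $[0,1/4]$, $t+1/4$ on $[1/4,1/2]$, $t/2+1/2$ on $[1/2,1]$) and $x_{k+1}=\varphi_R(x_k)$, where $\varphi_R(g)(t)=t$ on $[0,1/2]$ and $\tfrac12(1+g(2t-1))$ on $[1/2,1]$. Let $S$ be the set of dyadic rationals $t=\sum_{k=1}^m a_k2^{-k}$ ($a_k\in\{0,1\}$) with $\sum_ka_k$ even; Jones's oriented subgroup is $\vec F=\{g\in F: g(S)=S\}$ (equivalently the set of $g$ whose planar graph is 2-colourable). $\theta:\mathbb C[F]\to\mathbb C$ is the linear functional with $\theta(g)=1$ if $g\in\vec F$ and $\theta(g)=0$ otherwise, for $g\in F$. In $\mathbb C[F]$, $a_k=(x_k+x_k^{-1})/\sqrt2$ and $s_n=(a_0+\dots+a_{n-1})/\sqrt n$. *)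

theory Defs
  imports Complex_Main
begin

text \<open>Elements of Thompson's group F are represented as functions real \<Rightarrow> real which are
  the identity outside [0,1] (so that each element has a unique representative).\<close>

definition dyadic :: "real \<Rightarrow> bool" where
  "dyadic x \<longleftrightarrow> (\<exists>(k::int) (m::nat). x = of_int k / 2 ^ m)"

definition thompsonF :: "(real \<Rightarrow> real) set" where
  "thompsonF = {f.
     (\<forall>t. t \<notin> {0..1} \<longrightarrow> f t = t) \<and>
     bij_betw f {0..1} {0..1} \<and> continuous_on {0..1} f \<and>
     (\<exists>(bs::real list) (ks::int list) (cs::real list).
        length bs \<ge> 2 \<and> hd bs = 0 \<and> last bs = 1 \<and> sorted_wrt (<) bs \<and>
        (\<forall>b\<in>set bs. dyadic b) \<and>
        length ks = length bs - 1 \<and> length cs = length bs - 1 \<and>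
        (\<forall>i < length bs - 1. \<forall>t \<in> {bs!i..bs!(i+1)}.
            f t = 2 powr (of_int (ks!i)) * t + cs!i))}"

definition evenS :: "real set" where
  "evenS = {t. \<exists>(m::nat) (a::nat \<Rightarrow> nat). (\<forall>k. a k \<in> {0,1}) \<and>
              t = (\<Sum>k=1..m. real (a k) / 2 ^ k) \<and> even (\<Sum>k=1..m. a k)}"

definition orientedF :: "(real \<Rightarrow> real) set" where
  "orientedF = {g \<in> thompsonF. g ` evenS = evenS}"

definition x0 :: "real \<Rightarrow> real" where
  "x0 t = (if t < 0 \<or> t > 1 then t
           else if t \<le> 1/4 then 2 * t
           else if t \<le> 1/2 then t + 1/4
           else t / 2 + 1/2)"

definition phiR :: "(real \<Rightarrow> real) \<Rightarrow> real \<Rightarrow> real" where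
  "phiR g t = (if t \<le> 1/2 \<or> t > 1 then t else (1 + g (2 * t - 1)) / 2)"

fun xgen :: "nat \<Rightarrow> real \<Rightarrow> real" where
  "xgen 0 = x0"
| "xgen (Suc k) = phiR (xgen k)"

definition finv :: "(real \<Rightarrow> real) \<Rightarrow> real \<Rightarrow> real" where
  "finv f t = (if t \<in> {0..1} then the_inv_into {0..1} f t else t)"

text \<open>Group algebra C[F]: finitely supported functions F \<Rightarrow> complex.
  The group product is (f g)(t) = g (f t), i.e. f g = g \<circ> f.\<close>
type_synonym galg = "(real \<Rightarrow> real) \<Rightarrow> complex"

definition gelt :: "(real \<Rightarrow> real) \<Rightarrow> galg" where
  "gelt g = (\<lambda>h. if h = g then 1 else 0)"

definition gmult :: "galg \<Rightarrow> galg \<Rightarrow> galg" where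
  "gmult u v = (\<lambda>h. \<Sum>p \<in> {p. u (fst p) \<noteq> 0 \<and> v (snd p) \<noteq> 0 \<and> snd p \<circ> fst p = h}.
                       u (fst p) * v (snd p))"

definition theta :: "galg \<Rightarrow> complex" where
  "theta u = (\<Sum>g \<in> {g. u g \<noteq> 0 \<and> g \<in> orientedF}. u g)"

definition a_elt :: "nat \<Rightarrow> galg" where
  "a_elt k = (\<lambda>h. (gelt (xgen k) h + gelt (finv (xgen k)) h) / complex_of_real (sqrt 2))"

definition s_elt :: "nat \<Rightarrow> galg" where
  "s_elt n = (\<lambda>h. (\<Sum>k<n. a_elt k h) / complex_of_real (sqrt (real n)))"

end

theory Submission
  imports Defs
begin

text \<open>
  A dyadic rational \<open>N / 2^m\<close> in \<open>[0, 1)\<close> lies in \<open>S\<close> exactly when the binary digit sum of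
  \<open>N\<close> is even. The generators \<open>x\<^sub>j\<^sup>\<plusminus>\<^sup>1\<close> act on binary expansions by rewriting a bounded prefix:
  a direct check for \<open>j = 0\<close>, followed by induction along \<open>\<phi>\<^sub>R\<close> (which makes \<open>x\<^sub>j\<^sub>+\<^sub>1\<^sup>\<plusminus>\<^sup>1\<close> act as
  \<open>x\<^sub>j\<^sup>\<plusminus>\<^sup>1\<close> behind a leading digit 1), shows that \<open>x\<^sub>j\<close> preserves this parity below
  \<open>1 - 2\<^sup>-\<^sup>j\<^sup>-\<^sup>1\<close> and reverses it from there on, and \<open>x\<^sub>j\<^sup>-\<^sup>1\<close> does the same with threshold
  \<open>1 - 2\<^sup>-\<^sup>j\<^sup>-\<^sup>2\<close>. Hence a product \<open>g h\<close> of two generators maps \<open>S\<close> onto itself iff \<open>g\<close> maps its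
  own threshold onto the threshold of \<open>h\<close>; all such products lie in \<open>F\<close>. Among the \<open>2n\<close>
  generators \<open>x\<^sub>j\<^sup>\<plusminus>\<^sup>1\<close>, \<open>j < n\<close>, exactly \<open>4n - 2\<close> ordered pairs qualify, and since
  \<open>s\<^sub>n = (2n)\<^sup>-\<^sup>1\<^sup>/\<^sup>2 \<Sum> x\<^sub>j\<^sup>\<plusminus>\<^sup>1\<close> this gives \<open>\<theta>(s\<^sub>n\<^sup>2) = (4n - 2) / (2n)\<close>.
\<close>

section \<open>Binary digit sums and the set S\<close>

fun bitsum :: "nat \<Rightarrow> nat" where
  "bitsum n = (if n = 0 then 0 else n mod 2 + bitsum (n div 2))"

declare bitsum.simps[simp del]

lemma bitsum_0 [simp]: "bitsum 0 = 0"
  by (simp add: bitsum.simps)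

lemma bitsum_double_add: "b \<le> 1 \<Longrightarrow> bitsum (2 * n + b) = b + bitsum n"
  by (subst bitsum.simps) auto

lemma bitsum_double [simp]: "bitsum (2 * n) = bitsum n"
  using bitsum_double_add[of 0 n] by simp

lemma bitsum_Suc_0 [simp]: "bitsum (Suc 0) = 1"
  by (simp add: bitsum.simps)

lemma bitsum_mult_pow2 [simp]: "bitsum (n * 2 ^ r) = bitsum n"
  by (induction r) (simp_all add: mult.left_commute[of n 2])

lemma bitsum_mult_pow2_add: "r < 2 ^ k \<Longrightarrow> bitsum (a * 2 ^ k + r) = bitsum a + bitsum r"
proof (induction k arbitrary: r)
  case (Suc k)
  have "bitsum (a * 2 ^ Suc k + r) = bitsum (2 * (a * 2 ^ k + r div 2) + r mod 2)"
    by (rule arg_cong[where f = bitsum]) simp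
  also have "\<dots> = r mod 2 + bitsum (a * 2 ^ k + r div 2)"
    by (rule bitsum_double_add) simp
  also have "\<dots> = bitsum a + (r mod 2 + bitsum (r div 2))"
    using Suc by simp
  also have "r mod 2 + bitsum (r div 2) = bitsum r"
    by (subst (2) bitsum.simps) auto
  finally show ?case .
qed simp

definition binary_num :: "(nat \<Rightarrow> nat) \<Rightarrow> nat \<Rightarrow> nat" where
  "binary_num a m = (\<Sum>k=1..m. a k * 2 ^ (m - k))"

lemma binary_num_0 [simp]: "binary_num a 0 = 0"
  by (simp add: binary_num_def)

lemma binary_num_Suc: "binary_num a (Suc m) = 2 * binary_num a m + a (Suc m)"
proof -
  have "(\<Sum>k=1..m. a k * 2 ^ (Suc m - k)) = (\<Sum>k=1..m. 2 * (a k * 2 ^ (m - k)))"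
    by (rule sum.cong) (auto simp: Suc_diff_le)
  then show ?thesis
    by (simp add: binary_num_def sum_distrib_left)
qed

lemma binary_num_cong: "(\<And>k. k \<le> m \<Longrightarrow> a k = b k) \<Longrightarrow> binary_num a m = binary_num b m"
  unfolding binary_num_def by (rule sum.cong) auto

lemma binary_num_real: "real (binary_num a m) / 2 ^ m = (\<Sum>k=1..m. real (a k) / 2 ^ k)"
  by (induction m) (auto simp: binary_num_Suc field_simps)

context
  fixes a :: "nat \<Rightarrow> nat"
  assumes bits: "\<forall>k. a k \<in> {0, 1}"
begin

lemma digit_le_1: "a k \<le> 1"
  using bits[rule_format, of k] by auto

lemma bitsum_binary_num: "bitsum (binary_num a m) = (\<Sum>k=1..m. a k)"
proof (induction m)
  case (Suc m)
  have "bitsum (binary_num a (Suc m)) = a (Suc m) + bitsum (binary_num a m)"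
    unfolding binary_num_Suc by (rule bitsum_double_add[OF digit_le_1])
  then show ?case
    using Suc by simp
qed simp

lemma binary_num_less: "binary_num a m < 2 ^ m"
proof (induction m)
  case (Suc m)
  then show ?case
    using digit_le_1[of "Suc m"] by (simp add: binary_num_Suc)
qed simp

end

lemma binary_num_surj: "N < 2 ^ m \<Longrightarrow> \<exists>a. (\<forall>k. a k \<in> {0, 1}) \<and> binary_num a m = N"
proof (induction m arbitrary: N)
  case 0
  then show ?case by auto
next
  case (Suc m)
  then have "N div 2 < 2 ^ m"
    by simp
  then obtain a where a: "\<forall>k. a k \<in> {0, 1}" "binary_num a m = N div 2"
    using Suc.IH by blast
  have "binary_num (a(Suc m := N mod 2)) m = binary_num a m"
    by (rule binary_num_cong) simp
  then have "binary_num (a(Suc m := N mod 2)) (Suc m) = N"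
    using a by (simp add: binary_num_Suc)
  moreover have "\<forall>k. (a(Suc m := N mod 2)) k \<in> {0, 1}"
    using a by auto
  ultimately show ?case by blast
qed

lemma mem_evenS_iff: "N < 2 ^ m \<Longrightarrow> real N / 2 ^ m \<in> evenS \<longleftrightarrow> even (bitsum N)"
proof
  assume "real N / 2 ^ m \<in> evenS"
  then obtain m' a where a: "\<forall>k. a k \<in> {0, 1}"
    "real N / 2 ^ m = real (binary_num a m') / 2 ^ m'" "even (\<Sum>k=1..m'. a k)"
    unfolding evenS_def binary_num_real by blast
  then have "real (N * 2 ^ m') = real (binary_num a m' * 2 ^ m)"
    by (simp add: field_simps)
  then have "N * 2 ^ m' = binary_num a m' * 2 ^ m"
    by (simp only: of_nat_eq_iff)
  then have "bitsum N = bitsum (binary_num a m')"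
    by (metis bitsum_mult_pow2)
  then show "even (bitsum N)"
    using a bitsum_binary_num by simp
next
  assume "N < 2 ^ m" "even (bitsum N)"
  then obtain a where a: "\<forall>k. a k \<in> {0, 1}" "binary_num a m = N"
    using binary_num_surj by blast
  then have "real N / 2 ^ m = (\<Sum>k=1..m. real (a k) / 2 ^ k)" "even (\<Sum>k=1..m. a k)"
    using binary_num_real bitsum_binary_num \<open>even (bitsum N)\<close> by auto
  then show "real N / 2 ^ m \<in> evenS"
    unfolding evenS_def using a(1) by blast
qed

definition dyadic_unit :: "real set" where
  "dyadic_unit = {real N / 2 ^ m | N m. N < 2 ^ m}"

lemma evenS_subset_dyadic_unit: "evenS \<subseteq> dyadic_unit"
proof
  fix t assume "t \<in> evenS"
  then obtain m a where "\<forall>k. a k \<in> {0, 1}" "t = real (binary_num a m) / 2 ^ m"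
    unfolding evenS_def binary_num_real by blast
  then show "t \<in> dyadic_unit"
    unfolding dyadic_unit_def using binary_num_less by blast
qed

lemma dyadic_unit_bounds: "t \<in> dyadic_unit \<Longrightarrow> 0 \<le> t \<and> t < 1"
proof -
  assume "t \<in> dyadic_unit"
  then obtain N m where N: "N < 2 ^ m" "t = real N / 2 ^ m"
    unfolding dyadic_unit_def by blast
  then have "real N < 2 ^ m"
    by (metis of_nat_less_iff of_nat_numeral of_nat_power)
  then show ?thesis
    using N by simp
qed

lemma one_minus_pow2_in_dyadic_unit: "1 - 1 / 2 ^ r \<in> dyadic_unit"
proof -
  have "1 - 1 / 2 ^ r = real (2 ^ r - 1) / (2::real) ^ r"
    by (simp add: field_simps)
  then show ?thesis
    unfolding dyadic_unit_def by fastforce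
qed

lemma half_in_dyadic_unit: "t \<in> dyadic_unit \<Longrightarrow> t / 2 \<in> dyadic_unit"
proof -
  assume "t \<in> dyadic_unit"
  then obtain N m where "N < 2 ^ m" "t = real N / 2 ^ m"
    unfolding dyadic_unit_def by blast
  then have "t / 2 = real N / 2 ^ Suc m" "N < 2 ^ Suc m"
    by simp_all
  then show ?thesis
    unfolding dyadic_unit_def by blast
qed

lemma shift_in_dyadic_unit: "t \<in> dyadic_unit \<Longrightarrow> (1 + t) / 2 \<in> dyadic_unit"
proof -
  assume "t \<in> dyadic_unit"
  then obtain N m where "N < 2 ^ m" "t = real N / 2 ^ m"
    unfolding dyadic_unit_def by blast
  then have "(1 + t) / 2 = real (2 ^ m + N) / 2 ^ Suc m" "2 ^ m + N < 2 ^ Suc m"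
    by (simp_all add: field_simps)
  then show ?thesis
    unfolding dyadic_unit_def by blast
qed

lemma half_mem_evenS_iff: "t \<in> dyadic_unit \<Longrightarrow> t / 2 \<in> evenS \<longleftrightarrow> t \<in> evenS"
proof -
  assume "t \<in> dyadic_unit"
  then obtain N m where N: "N < 2 ^ m" "t = real N / 2 ^ m"
    unfolding dyadic_unit_def by blast
  have half: "t / 2 = real N / 2 ^ Suc m"
    using N by simp
  have "real N / 2 ^ Suc m \<in> evenS \<longleftrightarrow> even (bitsum N)"
    by (rule mem_evenS_iff) (use N in simp)
  then show ?thesis
    unfolding half using N mem_evenS_iff by simp
qed

lemma shift_mem_evenS_iff: "t \<in> dyadic_unit \<Longrightarrow> (1 + t) / 2 \<in> evenS \<longleftrightarrow> t \<notin> evenS"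
proof -
  assume "t \<in> dyadic_unit"
  then obtain N m where N: "N < 2 ^ m" "t = real N / 2 ^ m"
    unfolding dyadic_unit_def by blast
  have "(1 + t) / 2 = real (1 * 2 ^ m + N) / 2 ^ Suc m" "1 * 2 ^ m + N < 2 ^ Suc m"
    using N by (simp_all add: field_simps)
  moreover have "bitsum (1 * 2 ^ m + N) = Suc (bitsum N)"
    using bitsum_mult_pow2_add[OF N(1), of 1] by simp
  ultimately have "(1 + t) / 2 \<in> evenS \<longleftrightarrow> odd (bitsum N)"
    by (simp only: mem_evenS_iff[of "1 * 2 ^ m + N" "Suc m"]) simp
  then show ?thesis
    using N mem_evenS_iff by simp
qed

lemma dyadic_unit_cases:
  assumes "t \<in> dyadic_unit"
  obtains s where "s \<in> dyadic_unit" "t = s / 2" | s where "s \<in> dyadic_unit" "t = (1 + s) / 2"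
proof -
  obtain N m where N: "N < 2 ^ m" "t = real N / 2 ^ m"
    using assms unfolding dyadic_unit_def by blast
  show ?thesis
  proof (cases m)
    case 0
    then have "t = 0 / 2" "0 \<in> dyadic_unit"
      using N unfolding dyadic_unit_def by force+
    then show ?thesis using that by blast
  next
    case (Suc m')
    show ?thesis
    proof (cases "N < 2 ^ m'")
      case True
      then have "real N / 2 ^ m' \<in> dyadic_unit" "t = (real N / 2 ^ m') / 2"
        using N Suc unfolding dyadic_unit_def by auto
      then show ?thesis using that by blast
    next
      case False
      then have "N - 2 ^ m' < 2 ^ m'" "t = (1 + real (N - 2 ^ m') / 2 ^ m') / 2"
        using N Suc by (auto simp: field_simps)
      then show ?thesis
        using that unfolding dyadic_unit_def by blast
    qed
  qed
qed

section \<open>The generators as piecewise linear maps\<close>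

text \<open>\<open>xmap L\<close> is \<open>x\<^sub>0\<close> rescaled to \<open>[1 - L, 1]\<close>, so that \<open>x\<^sub>k = xmap (2\<^sup>-\<^sup>k)\<close>; writing its affine pieces
  as a max/min expression makes monotonicity and continuity immediate.\<close>

definition xmap :: "real \<Rightarrow> real \<Rightarrow> real" where
  "xmap L t = (if t < 0 \<or> t > 1 then t
     else max t (min (2 * t - (1 - L)) (min (t + L / 4) ((1 + t) / 2))))"

definition xmap_inv :: "real \<Rightarrow> real \<Rightarrow> real" where
  "xmap_inv L t = (if t < 0 \<or> t > 1 then t
     else min t (max ((t + (1 - L)) / 2) (max (t - L / 4) (2 * t - 1))))"

context
  fixes L :: real
  assumes L: "0 < L" "L \<le> 1"
begin

lemma xmap_id_piece: "0 \<le> t \<Longrightarrow> t \<le> 1 - L \<Longrightarrow> xmap L t = t"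
  using L by (auto simp: xmap_def max_def min_def)

lemma xmap_double_piece: "1 - L \<le> t \<Longrightarrow> t \<le> 1 - 3 * L / 4 \<Longrightarrow> xmap L t = 2 * t - (1 - L)"
  using L by (auto simp: xmap_def max_def min_def)

lemma xmap_translate_piece: "1 - 3 * L / 4 \<le> t \<Longrightarrow> t \<le> 1 - L / 2 \<Longrightarrow> xmap L t = t + L / 4"
  using L by (auto simp: xmap_def max_def min_def)

lemma xmap_halve_piece: "1 - L / 2 \<le> t \<Longrightarrow> t \<le> 1 \<Longrightarrow> xmap L t = (1 + t) / 2"
  using L by (auto simp: xmap_def max_def min_def)

lemma xmap_inv_id_piece: "0 \<le> t \<Longrightarrow> t \<le> 1 - L \<Longrightarrow> xmap_inv L t = t"
  using L by (auto simp: xmap_inv_def max_def min_def)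

lemma xmap_inv_halve_piece: "1 - L \<le> t \<Longrightarrow> t \<le> 1 - L / 2 \<Longrightarrow> xmap_inv L t = (t + (1 - L)) / 2"
  using L by (auto simp: xmap_inv_def max_def min_def)

lemma xmap_inv_translate_piece: "1 - L / 2 \<le> t \<Longrightarrow> t \<le> 1 - L / 4 \<Longrightarrow> xmap_inv L t = t - L / 4"
  using L by (auto simp: xmap_inv_def max_def min_def)

lemma xmap_inv_double_piece: "1 - L / 4 \<le> t \<Longrightarrow> t \<le> 1 \<Longrightarrow> xmap_inv L t = 2 * t - 1"
  using L by (auto simp: xmap_inv_def max_def min_def)

lemma xmap_xmap_inv: "xmap L (xmap_inv L t) = t"
proof -
  consider "t < 0 \<or> t > 1" | "0 \<le> t" "t \<le> 1 - L" | "1 - L \<le> t" "t \<le> 1 - L / 2"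
    | "1 - L / 2 \<le> t" "t \<le> 1 - L / 4" | "1 - L / 4 \<le> t" "t \<le> 1"
    by linarith
  then show ?thesis
  proof cases
    case 1
    then show ?thesis by (simp add: xmap_def xmap_inv_def)
  next
    case 2
    then show ?thesis by (simp add: xmap_id_piece xmap_inv_id_piece)
  next
    case 3
    then show ?thesis using L by (simp add: xmap_inv_halve_piece xmap_double_piece field_simps)
  next
    case 4
    then show ?thesis using L by (simp add: xmap_inv_translate_piece xmap_translate_piece)
  next
    case 5
    then show ?thesis using L by (simp add: xmap_inv_double_piece xmap_halve_piece)
  qed
qed

lemma xmap_inv_xmap: "xmap_inv L (xmap L t) = t"
proof -
  consider "t < 0 \<or> t > 1" | "0 \<le> t" "t \<le> 1 - L" | "1 - L \<le> t" "t \<le> 1 - 3 * L / 4"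
    | "1 - 3 * L / 4 \<le> t" "t \<le> 1 - L / 2" | "1 - L / 2 \<le> t" "t \<le> 1"
    by linarith
  then show ?thesis
  proof cases
    case 1
    then show ?thesis by (simp add: xmap_def xmap_inv_def)
  next
    case 2
    then show ?thesis by (simp add: xmap_id_piece xmap_inv_id_piece)
  next
    case 3
    then show ?thesis using L by (simp add: xmap_double_piece xmap_inv_halve_piece)
  next
    case 4
    then show ?thesis using L by (simp add: xmap_translate_piece xmap_inv_translate_piece)
  next
    case 5
    then show ?thesis using L by (simp add: xmap_halve_piece xmap_inv_double_piece field_simps)
  qed
qed

lemma phiR_xmap: "phiR (xmap L) = xmap (L / 2)"
  using L by (auto simp: fun_eq_iff phiR_def xmap_def max_def min_def)

lemma phiR_xmap_inv: "phiR (xmap_inv L) = xmap_inv (L / 2)"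
  using L by (auto simp: fun_eq_iff phiR_def xmap_inv_def max_def min_def)

end

lemma xmap_half_comp_xmap:
  assumes L: "0 < L" "L \<le> 1"
  shows "0 \<le> t \<Longrightarrow> t \<le> 1 - L \<Longrightarrow> xmap (L / 2) (xmap L t) = t"
    and "1 - L \<le> t \<Longrightarrow> t \<le> 1 - 5 * L / 8 \<Longrightarrow> xmap (L / 2) (xmap L t) = 2 * t - (1 - L)"
    and "1 - 5 * L / 8 \<le> t \<Longrightarrow> t \<le> 1 - L / 2 \<Longrightarrow> xmap (L / 2) (xmap L t) = t + 3 * L / 8"
    and "1 - L / 2 \<le> t \<Longrightarrow> t \<le> 1 \<Longrightarrow> xmap (L / 2) (xmap L t) = t / 4 + 3 / 4"
proof -
  show "xmap (L / 2) (xmap L t) = t" if "0 \<le> t" "t \<le> 1 - L"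
    using that L xmap_id_piece by simp
  show "xmap (L / 2) (xmap L t) = 2 * t - (1 - L)" if "1 - L \<le> t" "t \<le> 1 - 5 * L / 8"
  proof (cases "t \<le> 1 - 3 * L / 4")
    case True
    then show ?thesis
      using that L xmap_double_piece[of L t] xmap_id_piece[of "L / 2" "2 * t - (1 - L)"] by simp
  next
    case False
    then show ?thesis
      using that L xmap_translate_piece[of L t] xmap_double_piece[of "L / 2" "t + L / 4"] by simp
  qed
  show "xmap (L / 2) (xmap L t) = t + 3 * L / 8" if "1 - 5 * L / 8 \<le> t" "t \<le> 1 - L / 2"
    using that L xmap_translate_piece[of L t] xmap_translate_piece[of "L / 2" "t + L / 4"] by simp
  show "xmap (L / 2) (xmap L t) = t / 4 + 3 / 4" if "1 - L / 2 \<le> t" "t \<le> 1"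
  proof -
    have eq: "xmap L t = (1 + t) / 2" "xmap (L / 2) ((1 + t) / 2) = (1 + (1 + t) / 2) / 2"
      using that L xmap_halve_piece[of L t] xmap_halve_piece[of "L / 2" "(1 + t) / 2"] by simp_all
    show ?thesis
      unfolding eq by (simp add: field_simps)
  qed
qed

lemma xmap_inv_comp_xmap_inv_half:
  assumes L: "0 < L" "L \<le> 1"
  shows "0 \<le> t \<Longrightarrow> t \<le> 1 - L \<Longrightarrow> xmap_inv L (xmap_inv (L / 2) t) = t"
    and "1 - L \<le> t \<Longrightarrow> t \<le> 1 - L / 4 \<Longrightarrow> xmap_inv L (xmap_inv (L / 2) t) = t / 2 + (1 - L) / 2"
    and "1 - L / 4 \<le> t \<Longrightarrow> t \<le> 1 - L / 8 \<Longrightarrow> xmap_inv L (xmap_inv (L / 2) t) = t - 3 * L / 8"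
    and "1 - L / 8 \<le> t \<Longrightarrow> t \<le> 1 \<Longrightarrow> xmap_inv L (xmap_inv (L / 2) t) = 4 * t - 3"
proof -
  show "xmap_inv L (xmap_inv (L / 2) t) = t" if "0 \<le> t" "t \<le> 1 - L"
    using that L xmap_inv_id_piece by simp
  show "xmap_inv L (xmap_inv (L / 2) t) = t / 2 + (1 - L) / 2" if "1 - L \<le> t" "t \<le> 1 - L / 4"
  proof (cases "t \<le> 1 - L / 2")
    case True
    then show ?thesis
      using that L xmap_inv_id_piece[of "L / 2" t] xmap_inv_halve_piece[of L t] by (simp add: field_simps)
  next
    case False
    have eq: "xmap_inv (L / 2) t = (t + (1 - L / 2)) / 2"
      "xmap_inv L ((t + (1 - L / 2)) / 2) = (t + (1 - L / 2)) / 2 - L / 4"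
      using that False L xmap_inv_halve_piece[of "L / 2" t]
      by (simp, intro xmap_inv_translate_piece) (auto simp: field_simps)
    show ?thesis
      unfolding eq by (simp add: field_simps)
  qed
  show "xmap_inv L (xmap_inv (L / 2) t) = t - 3 * L / 8" if "1 - L / 4 \<le> t" "t \<le> 1 - L / 8"
    using that L xmap_inv_translate_piece[of "L / 2" t] xmap_inv_translate_piece[of L "t - L / 8"]
    by simp
  show "xmap_inv L (xmap_inv (L / 2) t) = 4 * t - 3" if "1 - L / 8 \<le> t" "t \<le> 1"
    using that L xmap_inv_double_piece[of "L / 2" t] xmap_inv_double_piece[of L "2 * t - 1"]
    by simp
qed

lemma xmap_mono:
  assumes "0 \<le> s" "s \<le> t" "t \<le> 1"
  shows "xmap L s \<le> xmap L t"
proof -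
  have "xmap L s = max s (min (2 * s - (1 - L)) (min (s + L / 4) ((1 + s) / 2)))"
    "xmap L t = max t (min (2 * t - (1 - L)) (min (t + L / 4) ((1 + t) / 2)))"
    using assms by (simp_all add: xmap_def)
  then show ?thesis
    by (simp only:) (intro max.mono min.mono, use assms in simp_all)
qed

lemma xmap_inv_mono:
  assumes "0 \<le> s" "s \<le> t" "t \<le> 1"
  shows "xmap_inv L s \<le> xmap_inv L t"
proof -
  have "xmap_inv L s = min s (max ((s + (1 - L)) / 2) (max (s - L / 4) (2 * s - 1)))"
    "xmap_inv L t = min t (max ((t + (1 - L)) / 2) (max (t - L / 4) (2 * t - 1)))"
    using assms by (simp_all add: xmap_inv_def)
  then show ?thesis
    by (simp only:) (intro max.mono min.mono, use assms in simp_all)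
qed

lemma xmap_in_unit: "t \<in> {0..1} \<Longrightarrow> xmap L t \<in> {0..1}"
  unfolding xmap_def by (auto simp: min_le_iff_disj le_max_iff_disj)

lemma xmap_inv_in_unit: "L \<le> 1 \<Longrightarrow> t \<in> {0..1} \<Longrightarrow> xmap_inv L t \<in> {0..1}"
  unfolding xmap_inv_def by (auto simp: min_le_iff_disj le_max_iff_disj)

lemma continuous_on_xmap: "continuous_on {0..1} (xmap L)"
proof -
  have "continuous_on {0..1} (\<lambda>t. max t (min (2 * t - (1 - L)) (min (t + L / 4) ((1 + t) / 2))))"
    by (intro continuous_on_max continuous_on_min continuous_intros) simp_all
  then show ?thesis
    by (rule continuous_on_cong[THEN iffD1, rotated 2]) (auto simp: xmap_def)
qed

lemma continuous_on_xmap_inv: "continuous_on {0..1} (xmap_inv L)"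
proof -
  have "continuous_on {0..1} (\<lambda>t. min t (max ((t + (1 - L)) / 2) (max (t - L / 4) (2 * t - 1))))"
    by (intro continuous_on_max continuous_on_min continuous_intros) simp_all
  then show ?thesis
    by (rule continuous_on_cong[THEN iffD1, rotated 2]) (auto simp: xmap_inv_def)
qed

lemma xgen_eq_xmap: "xgen k = xmap (1 / 2 ^ k)"
proof (induction k)
  case 0
  show ?case by (auto simp: fun_eq_iff x0_def xmap_def max_def min_def)
next
  case (Suc k)
  have "phiR (xmap (1 / 2 ^ k)) = xmap (1 / 2 ^ k / 2)"
    by (rule phiR_xmap) simp_all
  then show ?case
    using Suc by (simp add: mult.commute)
qed

section \<open>How the generators change parity\<close>

text \<open>\<open>xgen_pm True j\<close> is \<open>x\<^sub>j\<close> and \<open>xgen_pm False j\<close> is its inverse (\<open>xgen_eq_xgen_pm\<close>, \<open>finv_xgen\<close>).\<close>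

definition xgen_pm :: "bool \<Rightarrow> nat \<Rightarrow> real \<Rightarrow> real" where
  "xgen_pm e j = (if e then xmap else xmap_inv) (1 / 2 ^ j)"

lemma xgen_pm_inverse: "xgen_pm (\<not> e) j (xgen_pm e j t) = t"
  by (simp add: xgen_pm_def xmap_xmap_inv xmap_inv_xmap)

lemma xgen_pm_outside: "t \<notin> {0..1} \<Longrightarrow> xgen_pm e j t = t"
  by (auto simp: xgen_pm_def xmap_def xmap_inv_def)

lemma xgen_pm_in_unit: "t \<in> {0..1} \<Longrightarrow> xgen_pm e j t \<in> {0..1}"
  using xmap_in_unit xmap_inv_in_unit[of "1 / 2 ^ j"] by (simp add: xgen_pm_def)

lemma xgen_pm_less_iff:
  assumes "s \<in> {0..1}" "t \<in> {0..1}"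
  shows "xgen_pm e j s < xgen_pm e j t \<longleftrightarrow> s < t"
proof -
  have mono: "a \<le> b \<Longrightarrow> a \<in> {0..1} \<Longrightarrow> b \<in> {0..1} \<Longrightarrow> xgen_pm e j a \<le> xgen_pm e j b" for a b
    by (simp add: xgen_pm_def xmap_mono xmap_inv_mono)
  have "xgen_pm e j s \<noteq> xgen_pm e j t" if "s \<noteq> t"
    using that xgen_pm_inverse[of e j] by metis
  then show ?thesis
    using mono assms by (metis linorder_not_le order_less_le)
qed

lemma continuous_on_xgen_pm: "continuous_on {0..1} (xgen_pm e j)"
  by (simp add: xgen_pm_def continuous_on_xmap continuous_on_xmap_inv)

lemma xgen_pm_Suc: "xgen_pm e (Suc j) = phiR (xgen_pm e j)"
  by (simp add: xgen_pm_def phiR_xmap phiR_xmap_inv mult.commute)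

definition flip_point :: "bool \<Rightarrow> nat \<Rightarrow> real" where
  "flip_point e j = 1 - 1 / 2 ^ (j + (if e then 1 else 2))"

lemma flip_point_Suc: "flip_point e (Suc j) = (1 + flip_point e j) / 2"
  by (simp add: flip_point_def field_simps)

lemma xgen_pm_Suc_shift: "0 < s \<Longrightarrow> s \<le> 1 \<Longrightarrow> xgen_pm e (Suc j) ((1 + s) / 2) = (1 + xgen_pm e j s) / 2"
  by (simp add: xgen_pm_Suc phiR_def add_divide_distrib)

lemma xgen_pm_flip_point: "xgen_pm e j (flip_point e j) = 1 - 1 / 2 ^ (j + (if e then 2 else 1))"
  by (cases e) (simp_all add: xgen_pm_def flip_point_def xmap_halve_piece xmap_inv_translate_piece
      field_simps)

lemma quarter_cases:
  assumes "t \<in> dyadic_unit"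
  obtains r :: real and k :: nat where "r \<in> dyadic_unit" "k < 4" "t = (k + r) / 4"
proof (cases rule: dyadic_unit_cases[OF assms])
  case (1 s)
  then show ?thesis
    using that[of _ 0] that[of _ 1] by (cases rule: dyadic_unit_cases[of s]) auto
next
  case (2 s)
  then show ?thesis
    using that[of _ 2] that[of _ 3] by (cases rule: dyadic_unit_cases[of s]) (auto simp: field_simps)
qed

lemma quarter_mem_evenS_iff:
  fixes r :: real and k :: nat
  assumes r: "r \<in> dyadic_unit" and "k < 4"
  shows "(k + r) / 4 \<in> dyadic_unit \<and> ((k + r) / 4 \<in> evenS \<longleftrightarrow> (r \<in> evenS \<longleftrightarrow> k = 0 \<or> k = 3))"
proof -
  have halves: "r / 2 \<in> dyadic_unit" "(1 + r) / 2 \<in> dyadic_unit"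
    using r half_in_dyadic_unit shift_in_dyadic_unit by blast+
  note rules = half_in_dyadic_unit[OF halves(1)] half_in_dyadic_unit[OF halves(2)]
    shift_in_dyadic_unit[OF halves(1)] shift_in_dyadic_unit[OF halves(2)]
    half_mem_evenS_iff[OF halves(1)] half_mem_evenS_iff[OF halves(2)]
    shift_mem_evenS_iff[OF halves(1)] shift_mem_evenS_iff[OF halves(2)]
    half_mem_evenS_iff[OF r] shift_mem_evenS_iff[OF r]
  from \<open>k < 4\<close> consider "k = 0" | "k = 1" | "k = 2" | "k = 3"
    by linarith
  then show ?thesis
  proof cases
    case 1
    then have "(k + r) / 4 = (r / 2) / 2"
      by simp
    with 1 show ?thesis
      by (simp only: rules) simp
  next
    case 2
    then have "(k + r) / 4 = ((1 + r) / 2) / 2"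
      by simp
    with 2 show ?thesis
      by (simp only: rules) simp
  next
    case 3
    then have "(k + r) / 4 = (1 + r / 2) / 2"
      by simp
    with 3 show ?thesis
      by (simp only: rules) simp
  next
    case 4
    then have "(k + r) / 4 = (1 + (1 + r) / 2) / 2"
      by simp
    with 4 show ?thesis
      by (simp only: rules) simp
  qed
qed

lemma xmap_one_parity:
  assumes "t \<in> dyadic_unit"
  shows "xmap 1 t \<in> dyadic_unit \<and> (xmap 1 t \<in> evenS \<longleftrightarrow> (t \<in> evenS \<longleftrightarrow> t < 1 / 2))"
proof -
  obtain r :: real and k :: nat where r: "r \<in> dyadic_unit" "k < 4" "t = (k + r) / 4"
    using quarter_cases[OF assms] .
  have "0 \<le> r" "r < 1"
    using r dyadic_unit_bounds by auto
  have halves: "r / 2 \<in> dyadic_unit" "(1 + r) / 2 \<in> dyadic_unit"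
    using r half_in_dyadic_unit shift_in_dyadic_unit by blast+
  note quarter = quarter_mem_evenS_iff[OF r(1,2)]
  from r(2) consider "k = 0" | "k = 1" | "k = 2" | "k = 3"
    by linarith
  then show ?thesis
  proof cases
    case 1
    then have eq: "xmap 1 t = r / 2" "t = r / 4"
      using r \<open>0 \<le> r\<close> \<open>r < 1\<close> xmap_double_piece[of 1 t] by simp_all
    show ?thesis
      unfolding eq(1) unfolding eq(2) using 1 quarter \<open>r < 1\<close> halves half_mem_evenS_iff[OF r(1)] by simp
  next
    case 2
    then have eq: "xmap 1 t = (2 + r) / 4" "t = (1 + r) / 4"
      using r \<open>0 \<le> r\<close> \<open>r < 1\<close> xmap_translate_piece[of 1 t] by simp_all
    show ?thesis
      unfolding eq(1) unfolding eq(2) using 2 quarter \<open>r < 1\<close> quarter_mem_evenS_iff[OF r(1), of 2] by simp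
  next
    case 3
    then have eq: "xmap 1 t = (3 + r / 2) / 4" "t = (2 + r) / 4"
      using r \<open>0 \<le> r\<close> \<open>r < 1\<close> xmap_halve_piece[of 1 t] by (simp_all add: field_simps)
    show ?thesis
      unfolding eq(1) unfolding eq(2) using 3 quarter \<open>0 \<le> r\<close> quarter_mem_evenS_iff[OF halves(1), of 3]
        half_mem_evenS_iff[OF r(1)] by simp
  next
    case 4
    then have eq: "xmap 1 t = (3 + (1 + r) / 2) / 4" "t = (3 + r) / 4"
      using r \<open>0 \<le> r\<close> \<open>r < 1\<close> xmap_halve_piece[of 1 t] by (simp_all add: field_simps)
    show ?thesis
      unfolding eq(1) unfolding eq(2) using 4 quarter \<open>0 \<le> r\<close> quarter_mem_evenS_iff[OF halves(2), of 3]
        shift_mem_evenS_iff[OF r(1)] by simp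
  qed
qed

lemma xmap_inv_one_parity:
  assumes "t \<in> dyadic_unit"
  shows "xmap_inv 1 t \<in> dyadic_unit \<and> (xmap_inv 1 t \<in> evenS \<longleftrightarrow> (t \<in> evenS \<longleftrightarrow> t < 3 / 4))"
proof -
  obtain r :: real and k :: nat where r: "r \<in> dyadic_unit" "k < 4" "t = (k + r) / 4"
    using quarter_cases[OF assms] .
  have "0 \<le> r" "r < 1"
    using r dyadic_unit_bounds by auto
  have halves: "r / 2 \<in> dyadic_unit" "(1 + r) / 2 \<in> dyadic_unit"
    using r half_in_dyadic_unit shift_in_dyadic_unit by blast+
  note quarter = quarter_mem_evenS_iff[OF r(1,2)]
  from r(2) consider "k = 0" | "k = 1" | "k = 2" | "k = 3"
    by linarith
  then show ?thesis
  proof cases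
    case 1
    then have eq: "xmap_inv 1 t = (0 + r / 2) / 4" "t = r / 4"
      using r \<open>0 \<le> r\<close> \<open>r < 1\<close> xmap_inv_halve_piece[of 1 t] by simp_all
    show ?thesis
      unfolding eq(1) unfolding eq(2) using 1 quarter \<open>r < 1\<close> quarter_mem_evenS_iff[OF halves(1), of 0]
        half_mem_evenS_iff[OF r(1)] by simp
  next
    case 2
    then have eq: "xmap_inv 1 t = (0 + (1 + r) / 2) / 4" "t = (1 + r) / 4"
      using r \<open>0 \<le> r\<close> \<open>r < 1\<close> xmap_inv_halve_piece[of 1 t] by simp_all
    show ?thesis
      unfolding eq(1) unfolding eq(2) using 2 quarter \<open>r < 1\<close> quarter_mem_evenS_iff[OF halves(2), of 0]
        shift_mem_evenS_iff[OF r(1)] by simp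
  next
    case 3
    then have eq: "xmap_inv 1 t = (1 + r) / 4" "t = (2 + r) / 4"
      using r \<open>0 \<le> r\<close> \<open>r < 1\<close> xmap_inv_translate_piece[of 1 t] by simp_all
    show ?thesis
      unfolding eq(1) unfolding eq(2) using 3 quarter \<open>r < 1\<close> quarter_mem_evenS_iff[OF r(1), of 1] by simp
  next
    case 4
    then have eq: "xmap_inv 1 t = (1 + r) / 2" "t = (3 + r) / 4"
      using r \<open>0 \<le> r\<close> \<open>r < 1\<close> xmap_inv_double_piece[of 1 t] by (simp_all add: field_simps)
    show ?thesis
      unfolding eq(1) unfolding eq(2) using 4 quarter \<open>0 \<le> r\<close> halves shift_mem_evenS_iff[OF r(1)] by simp
  qed
qed

lemma xgen_pm_parity:
  assumes "t \<in> dyadic_unit"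
  shows "xgen_pm e j t \<in> dyadic_unit \<and> (xgen_pm e j t \<in> evenS \<longleftrightarrow> (t \<in> evenS \<longleftrightarrow> t < flip_point e j))"
  using assms
proof (induction j arbitrary: t)
  case 0
  then show ?case
    using xmap_one_parity xmap_inv_one_parity by (simp add: xgen_pm_def flip_point_def)
next
  case (Suc j)
  show ?case
  proof (cases "t \<le> 1 / 2")
    case True
    moreover have "1 / 2 < flip_point e (Suc j)"
      by (simp add: flip_point_def)
    ultimately show ?thesis
      using Suc.prems by (simp add: xgen_pm_Suc phiR_def)
  next
    case False
    obtain s where s: "s \<in> dyadic_unit" "t = (1 + s) / 2"
    proof (cases rule: dyadic_unit_cases[OF Suc.prems])
      case (1 s)
      then show ?thesis
        using False dyadic_unit_bounds[of s] by simp
    qed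
    have "0 < s" "s \<le> 1"
      using False s dyadic_unit_bounds[of s] by auto
    then have image: "xgen_pm e (Suc j) t = (1 + xgen_pm e j s) / 2"
      unfolding s(2) by (rule xgen_pm_Suc_shift)
    have "t < flip_point e (Suc j) \<longleftrightarrow> s < flip_point e j"
      using s(2) by (auto simp: flip_point_Suc field_simps)
    moreover have "t \<in> evenS \<longleftrightarrow> s \<notin> evenS"
      unfolding s(2) using s(1) by (rule shift_mem_evenS_iff)
    moreover note IH = Suc.IH[OF s(1)]
    ultimately show ?thesis
      unfolding image using shift_in_dyadic_unit[OF IH[THEN conjunct1]]
        shift_mem_evenS_iff[OF IH[THEN conjunct1]] by blast
  qed
qed

section \<open>Products of two generators\<close>

lemma bij_image_eq_self_iff:
  assumes bij: "bij_betw h D D" and "S \<subseteq> D"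
    and parity: "\<And>t. t \<in> D \<Longrightarrow> h t \<in> S \<longleftrightarrow> (t \<in> S \<longleftrightarrow> P t)"
  shows "h ` S = S \<longleftrightarrow> (\<forall>t \<in> D. P t)"
proof
  assume "\<forall>t \<in> D. P t"
  then have "h ` S = h ` D \<inter> S"
    using parity \<open>S \<subseteq> D\<close> by auto
  then show "h ` S = S"
    using bij \<open>S \<subseteq> D\<close> by (auto simp: bij_betw_def)
next
  assume image: "h ` S = S"
  show "\<forall>t \<in> D. P t"
  proof (rule ccontr)
    assume "\<not> (\<forall>t \<in> D. P t)"
    then obtain t where t: "t \<in> D" "h t \<in> S \<longleftrightarrow> t \<notin> S"
      using parity by blast
    have "h t \<in> h ` S \<longleftrightarrow> t \<in> S"
      using bij t(1) \<open>S \<subseteq> D\<close> by (intro inj_on_image_mem_iff) (auto simp: bij_betw_def)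
    then show False
      using t image by blast
  qed
qed

lemma threshold_eq_iff:
  fixes a b :: "'a :: linorder"
  assumes "a \<in> A" "b \<in> A"
  shows "(\<forall>t \<in> A. t < a \<longleftrightarrow> t < b) \<longleftrightarrow> a = b"
  using assms by (metis linorder_neq_iff order_less_irrefl)

lemma xgen_pm_in_dyadic_unit: "t \<in> dyadic_unit \<Longrightarrow> xgen_pm e j t \<in> dyadic_unit"
  using xgen_pm_parity by blast

lemma bij_betw_xgen_pm_dyadic_unit: "bij_betw (xgen_pm e j) dyadic_unit dyadic_unit"
  by (rule bij_betw_byWitness[where f' = "xgen_pm (\<not> e) j"])
    (use xgen_pm_inverse[of e] xgen_pm_inverse[of "\<not> e"] xgen_pm_in_dyadic_unit in auto)

lemma flip_point_in_dyadic_unit: "flip_point e j \<in> dyadic_unit"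
  unfolding flip_point_def by (rule one_minus_pow2_in_dyadic_unit)

lemma xgen_pm_comp_parity:
  assumes t: "t \<in> dyadic_unit"
  shows "xgen_pm d k (xgen_pm e j t) \<in> evenS \<longleftrightarrow>
    (t \<in> evenS \<longleftrightarrow> (t < flip_point e j \<longleftrightarrow> t < xgen_pm (\<not> e) j (flip_point d k)))"
proof -
  have "xgen_pm e j t < flip_point d k \<longleftrightarrow>
      xgen_pm e j t < xgen_pm e j (xgen_pm (\<not> e) j (flip_point d k))"
    using xgen_pm_inverse[of "\<not> e"] by simp
  also have "\<dots> \<longleftrightarrow> t < xgen_pm (\<not> e) j (flip_point d k)"
    using t flip_point_in_dyadic_unit xgen_pm_in_dyadic_unit dyadic_unit_bounds
    by (intro xgen_pm_less_iff) (auto simp: less_imp_le)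
  finally show ?thesis
    using xgen_pm_parity[OF t, of e j] xgen_pm_parity[OF xgen_pm_in_dyadic_unit[OF t], of d k]
    by blast
qed

text \<open>Since \<open>(f g)(t) = g (f t)\<close> in \<open>F\<close>, \<open>xgen_pm d k \<circ> xgen_pm e j\<close> is the product of
  \<open>xgen_pm e j\<close> and \<open>xgen_pm d k\<close> in this order.\<close>

lemma xgen_pm_comp_image_evenS_iff:
  "(xgen_pm d k \<circ> xgen_pm e j) ` evenS = evenS \<longleftrightarrow>
    j + (if e then 1 else 0) = k + (if d then 0 else 1)"
proof -
  have "bij_betw (xgen_pm d k \<circ> xgen_pm e j) dyadic_unit dyadic_unit"
    using bij_betw_trans bij_betw_xgen_pm_dyadic_unit by blast
  then have "(xgen_pm d k \<circ> xgen_pm e j) ` evenS = evenS \<longleftrightarrow>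
      (\<forall>t \<in> dyadic_unit. t < flip_point e j \<longleftrightarrow> t < xgen_pm (\<not> e) j (flip_point d k))"
    by (rule bij_image_eq_self_iff) (simp_all add: evenS_subset_dyadic_unit xgen_pm_comp_parity)
  also have "\<dots> \<longleftrightarrow> flip_point e j = xgen_pm (\<not> e) j (flip_point d k)"
    using flip_point_in_dyadic_unit xgen_pm_in_dyadic_unit by (intro threshold_eq_iff) auto
  also have "\<dots> \<longleftrightarrow> xgen_pm e j (flip_point e j) = flip_point d k"
    using xgen_pm_inverse[of e] xgen_pm_inverse[of "\<not> e"] by (metis (full_types))
  also have "\<dots> \<longleftrightarrow> (2::real) ^ (j + (if e then 2 else 1)) = 2 ^ (k + (if d then 1 else 2))"
    unfolding xgen_pm_flip_point by (simp add: flip_point_def)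
  also have "\<dots> \<longleftrightarrow> j + (if e then 1 else 0) = k + (if d then 0 else 1)"
    by (auto simp: power_inject_exp)
  finally show ?thesis .
qed

lemma dyadic_one_minus: "dyadic (1 - real a / 2 ^ m)"
  unfolding dyadic_def by (rule exI[of _ "2 ^ m - int a"], rule exI[of _ m]) (simp add: field_simps)

text \<open>The breakpoint list may start at \<open>a\<close>: the identity piece on \<open>[0, a]\<close> is prepended unless it
  is degenerate, as the definition of \<open>F\<close> requires strictly increasing breakpoints.\<close>

lemma thompsonF_I_id_below:
  fixes ks :: "int list"
  assumes F: "\<forall>t. t \<notin> {0..1} \<longrightarrow> f t = t" "bij_betw f {0..1} {0..1}" "continuous_on {0..1} f"
    and id: "\<forall>t \<in> {0..a}. f t = t"
    and bs: "length bs \<ge> 2" "hd bs = a" "last bs = 1" "sorted_wrt (<) bs" "\<forall>b\<in>set bs. dyadic b"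
    and "0 \<le> a"
    and ks: "length ks = length bs - 1" and cs: "length cs = length bs - 1"
    and pieces: "\<forall>i < length bs - 1. \<forall>t \<in> {bs!i..bs!(i+1)}. f t = 2 powr of_int (ks!i) * t + cs!i"
  shows "f \<in> thompsonF"
proof (cases "a = 0")
  case True
  then show ?thesis
    unfolding thompsonF_def using F bs ks cs pieces by blast
next
  case False
  have "\<forall>b \<in> set bs. a \<le> b"
    using bs by (cases bs) (auto simp: less_imp_le)
  then have "sorted_wrt (<) (0 # bs)"
    using bs \<open>0 \<le> a\<close> False by auto
  moreover have "\<forall>b\<in>set (0 # bs). dyadic b"
    using bs unfolding dyadic_def by (auto intro: exI[of _ 0])
  moreover have "\<forall>i < length (0 # bs) - 1. \<forall>t \<in> {(0 # bs)!i..(0 # bs)!(i+1)}.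
      f t = 2 powr of_int ((0 # ks)!i) * t + (0 # cs)!i"
  proof (intro allI impI ballI)
    fix i t assume "i < length (0 # bs) - 1" "t \<in> {(0 # bs)!i..(0 # bs)!(i+1)}"
    then show "f t = 2 powr of_int ((0 # ks)!i) * t + (0 # cs)!i"
      using id pieces bs(1,2) by (cases i) (auto simp: hd_conv_nth)
  qed
  ultimately show ?thesis
    unfolding thompsonF_def using F bs ks cs
    by (intro CollectI conjI exI[of _ "0 # bs"] exI[of _ "0 # ks"] exI[of _ "0 # cs"]) auto
qed

lemma bij_betw_xgen_pm_unit: "bij_betw (xgen_pm e j) {0..1} {0..1}"
  by (rule bij_betw_byWitness[where f' = "xgen_pm (\<not> e) j"])
    (use xgen_pm_inverse[of e] xgen_pm_inverse[of "\<not> e"] xgen_pm_in_unit in auto)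

lemma xgen_pm_comp_unit_homeo:
  "\<forall>t. t \<notin> {0..1} \<longrightarrow> (xgen_pm d k \<circ> xgen_pm e j) t = t"
  "bij_betw (xgen_pm d k \<circ> xgen_pm e j) {0..1} {0..1}"
  "continuous_on {0..1} (xgen_pm d k \<circ> xgen_pm e j)"
proof -
  show "\<forall>t. t \<notin> {0..1} \<longrightarrow> (xgen_pm d k \<circ> xgen_pm e j) t = t"
    by (simp add: xgen_pm_outside)
  show "bij_betw (xgen_pm d k \<circ> xgen_pm e j) {0..1} {0..1}"
    by (rule bij_betw_trans[OF bij_betw_xgen_pm_unit bij_betw_xgen_pm_unit])
  have "xgen_pm e j ` {0..1} \<subseteq> {0..1}"
    using xgen_pm_in_unit by blast
  then show "continuous_on {0..1} (xgen_pm d k \<circ> xgen_pm e j)"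
    by (intro continuous_on_compose continuous_on_xgen_pm continuous_on_subset[OF continuous_on_xgen_pm])
qed

lemma xgen_Suc_comp_xgen_in_thompsonF: "xgen_pm True (Suc j) \<circ> xgen_pm True j \<in> thompsonF"
proof -
  define L :: real where "L = 1 / 2 ^ j"
  have L: "0 < L" "L \<le> 1"
    by (simp_all add: L_def)
  have comp: "xgen_pm True (Suc j) (xgen_pm True j t) = xmap (L / 2) (xmap L t)" for t
    by (simp add: xgen_pm_def L_def mult.commute)
  show ?thesis
  proof (rule thompsonF_I_id_below[OF xgen_pm_comp_unit_homeo, where a = "1 - L"
        and bs = "[1 - L, 1 - 5 * L / 8, 1 - L / 2, 1]" and ks = "[1, 0, -2]"
        and cs = "[- (1 - L), 3 * L / 8, 3 / 4]"])
    show "\<forall>b\<in>set [1 - L, 1 - 5 * L / 8, 1 - L / 2, 1]. dyadic b"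
      using dyadic_one_minus[of 1 j] dyadic_one_minus[of 5 "j + 3"] dyadic_one_minus[of 1 "j + 1"]
        dyadic_one_minus[of 0 0]
      by (simp add: L_def power_add mult.commute)
    show "\<forall>i < length [1 - L, 1 - 5 * L / 8, 1 - L / 2, 1] - 1.
        \<forall>t \<in> {[1 - L, 1 - 5 * L / 8, 1 - L / 2, 1] ! i..[1 - L, 1 - 5 * L / 8, 1 - L / 2, 1] ! (i + 1)}.
        (xgen_pm True (Suc j) \<circ> xgen_pm True j) t =
          2 powr of_int ([1, 0, -2] ! i) * t + [- (1 - L), 3 * L / 8, 3 / 4] ! i"
      using xmap_half_comp_xmap(2-4)[OF L] by (auto simp: comp less_Suc_eq powr_minus)
  qed (use L xmap_half_comp_xmap(1)[OF L] in \<open>auto simp: comp\<close>)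
qed

lemma xgen_inv_comp_xgen_inv_Suc_in_thompsonF: "xgen_pm False j \<circ> xgen_pm False (Suc j) \<in> thompsonF"
proof -
  define L :: real where "L = 1 / 2 ^ j"
  have L: "0 < L" "L \<le> 1"
    by (simp_all add: L_def)
  have comp: "xgen_pm False j (xgen_pm False (Suc j) t) = xmap_inv L (xmap_inv (L / 2) t)" for t
    by (simp add: xgen_pm_def L_def mult.commute)
  show ?thesis
  proof (rule thompsonF_I_id_below[OF xgen_pm_comp_unit_homeo, where a = "1 - L"
        and bs = "[1 - L, 1 - L / 4, 1 - L / 8, 1]" and ks = "[-1, 0, 2]"
        and cs = "[(1 - L) / 2, - (3 * L / 8), -3]"])
    show "\<forall>b\<in>set [1 - L, 1 - L / 4, 1 - L / 8, 1]. dyadic b"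
      using dyadic_one_minus[of 1 j] dyadic_one_minus[of 1 "j + 2"] dyadic_one_minus[of 1 "j + 3"]
        dyadic_one_minus[of 0 0]
      by (simp add: L_def power_add mult.commute)
    show "\<forall>i < length [1 - L, 1 - L / 4, 1 - L / 8, 1] - 1.
        \<forall>t \<in> {[1 - L, 1 - L / 4, 1 - L / 8, 1] ! i..[1 - L, 1 - L / 4, 1 - L / 8, 1] ! (i + 1)}.
        (xgen_pm False j \<circ> xgen_pm False (Suc j)) t =
          2 powr of_int ([-1, 0, 2] ! i) * t + [(1 - L) / 2, - (3 * L / 8), -3] ! i"
      using xmap_inv_comp_xmap_inv_half(2-4)[OF L]
      by (auto simp: comp less_Suc_eq powr_minus powr_numeral)
  qed (use L xmap_inv_comp_xmap_inv_half(1)[OF L] in \<open>auto simp: comp\<close>)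
qed

lemma id_in_thompsonF: "(\<lambda>t. t) \<in> thompsonF"
  unfolding thompsonF_def dyadic_def
  by (intro CollectI conjI exI[of _ "[0, 1]"] exI[of _ "[0]"]) (auto simp: bij_betw_def intro: exI[of _ 0] exI[of _ 1])

lemma xgen_pm_inverse_comp: "xgen_pm (\<not> e) j \<circ> xgen_pm e j = (\<lambda>t. t)"
  by (simp add: fun_eq_iff xgen_pm_inverse)

lemma id_in_orientedF: "(\<lambda>t. t) \<in> orientedF"
  unfolding orientedF_def using id_in_thompsonF by simp

lemma xgen_pm_comp_orientedF_iff:
  "xgen_pm d k \<circ> xgen_pm e j \<in> orientedF \<longleftrightarrow> j + (if e then 1 else 0) = k + (if d then 0 else 1)"
proof
  assume "xgen_pm d k \<circ> xgen_pm e j \<in> orientedF"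
  then have "(xgen_pm d k \<circ> xgen_pm e j) ` evenS = evenS"
    unfolding orientedF_def by blast
  then show "j + (if e then 1 else 0) = k + (if d then 0 else 1)"
    using xgen_pm_comp_image_evenS_iff by blast
next
  assume index: "j + (if e then 1 else 0) = k + (if d then 0 else 1)"
  consider "e" "d" "k = Suc j" | "\<not> e" "\<not> d" "j = Suc k" | "d = (\<not> e)" "k = j"
    using index by (cases e; cases d) auto
  then have "xgen_pm d k \<circ> xgen_pm e j \<in> thompsonF"
    by cases (simp_all add: xgen_Suc_comp_xgen_in_thompsonF xgen_inv_comp_xgen_inv_Suc_in_thompsonF
        xgen_pm_inverse_comp id_in_thompsonF)
  then show "xgen_pm d k \<circ> xgen_pm e j \<in> orientedF"
    unfolding orientedF_def using index xgen_pm_comp_image_evenS_iff by simp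
qed

lemma xgen_pm_eq_iff: "xgen_pm e j = xgen_pm d k \<longleftrightarrow> e = d \<and> j = k"
proof
  assume eq: "xgen_pm e j = xgen_pm d k"
  have "xgen_pm (\<not> d) k \<circ> xgen_pm e j \<in> orientedF" "xgen_pm d k \<circ> xgen_pm (\<not> e) j \<in> orientedF"
    using xgen_pm_inverse_comp[of d k] xgen_pm_inverse_comp[of "\<not> e" j] id_in_orientedF eq by simp_all
  then show "e = d \<and> j = k"
    unfolding xgen_pm_comp_orientedF_iff by (cases e; cases d) simp_all
qed simp

lemma xgen_eq_xgen_pm: "xgen k = xgen_pm True k"
  by (simp add: xgen_eq_xmap xgen_pm_def)

lemma finv_xgen: "finv (xgen k) = xgen_pm False k"
proof
  fix t
  show "finv (xgen k) t = xgen_pm False k t"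
  proof (cases "t \<in> {0..1}")
    case True
    have "the_inv_into {0..1} (xgen_pm True k) t = xgen_pm False k t"
      using bij_betw_xgen_pm_unit[of True k] True xgen_pm_in_unit xgen_pm_inverse[of False k t]
      by (intro the_inv_into_f_eq) (auto simp: bij_betw_def)
    then show ?thesis
      using True by (simp add: finv_def xgen_eq_xgen_pm)
  next
    case False
    then show ?thesis
      by (auto simp: finv_def xgen_pm_outside)
  qed
qed

section \<open>The computation in the group algebra\<close>

lemma gmult_indicator:
  fixes c :: complex
  assumes u: "\<And>h. u h = (if h \<in> A then c else 0)" and "c \<noteq> 0"
  shows "gmult u u h = of_nat (card {p \<in> A \<times> A. snd p \<circ> fst p = h}) * c ^ 2"
proof -
  have "{p. u (fst p) \<noteq> 0 \<and> u (snd p) \<noteq> 0 \<and> snd p \<circ> fst p = h} = {p \<in> A \<times> A. snd p \<circ> fst p = h}"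
    using \<open>c \<noteq> 0\<close> by (auto simp: u mem_Times_iff)
  moreover have "u (fst p) * u (snd p) = c ^ 2" if "p \<in> {p \<in> A \<times> A. snd p \<circ> fst p = h}" for p
    using that by (auto simp: u mem_Times_iff power2_eq_square)
  ultimately show ?thesis
    unfolding gmult_def by simp
qed

lemma theta_eq_sum:
  assumes "finite T" "{g. v g \<noteq> 0} \<subseteq> T"
  shows "theta v = (\<Sum>g \<in> T \<inter> orientedF. v g)"
  unfolding theta_def by (rule sum.mono_neutral_left) (use assms in auto)

lemma theta_gmult_indicator:
  fixes c :: complex
  assumes u: "\<And>h. u h = (if h \<in> A then c else 0)" and "c \<noteq> 0" and "finite A"
  shows "theta (gmult u u) = of_nat (card {p \<in> A \<times> A. snd p \<circ> fst p \<in> orientedF}) * c ^ 2"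
proof -
  define cmp :: "(real \<Rightarrow> real) \<times> (real \<Rightarrow> real) \<Rightarrow> real \<Rightarrow> real" where "cmp p = snd p \<circ> fst p" for p
  define Q where "Q = {p \<in> A \<times> A. cmp p \<in> orientedF}"
  define H where "H = cmp ` (A \<times> A) \<inter> orientedF"
  have fin: "finite (A \<times> A)" "finite Q" "finite H"
    using \<open>finite A\<close> by (simp_all add: Q_def H_def)
  have gm: "gmult u u h = of_nat (card {p \<in> A \<times> A. cmp p = h}) * c ^ 2" for h
    unfolding cmp_def by (rule gmult_indicator[OF u \<open>c \<noteq> 0\<close>])
  have "{h. gmult u u h \<noteq> 0} \<subseteq> cmp ` (A \<times> A)"
    by (force simp: gm card_gt_0_iff)
  then have "theta (gmult u u) = (\<Sum>h \<in> H. gmult u u h)"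
    unfolding H_def by (intro theta_eq_sum finite_imageI fin(1))
  also have "\<dots> = (\<Sum>h \<in> H. of_nat (card {p \<in> Q. cmp p = h}) * c ^ 2)"
  proof (rule sum.cong)
    fix h assume "h \<in> H"
    then have "{p \<in> A \<times> A. cmp p = h} = {p \<in> Q. cmp p = h}"
      by (auto simp: H_def Q_def)
    then show "gmult u u h = of_nat (card {p \<in> Q. cmp p = h}) * c ^ 2"
      by (simp add: gm)
  qed simp
  also have "\<dots> = of_nat (\<Sum>h \<in> H. card {p \<in> Q. cmp p = h}) * c ^ 2"
    by (simp add: sum_distrib_right)
  also have "(\<Sum>h \<in> H. card {p \<in> Q. cmp p = h}) = card Q"
    using sum.group[OF fin(2,3), of cmp "\<lambda>_. 1::nat"] by (auto simp: Q_def H_def)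
  finally show ?thesis
    by (simp add: Q_def cmp_def)
qed

definition gens :: "nat \<Rightarrow> (real \<Rightarrow> real) set" where
  "gens n = (\<lambda>(e, j). xgen_pm e j) ` (UNIV \<times> {..<n})"

lemma finite_gens: "finite (gens n)"
  by (simp add: gens_def)

lemma sum_gelt_xgen_pm:
  "(\<Sum>k<n. gelt (xgen_pm True k) h + gelt (xgen_pm False k) h) = (if h \<in> gens n then 1 else 0)"
proof (cases "h \<in> gens n")
  case True
  then obtain e j where h: "h = xgen_pm e j" "j < n"
    unfolding gens_def by auto
  have "(\<Sum>k<n. gelt (xgen_pm True k) h + gelt (xgen_pm False k) h) = (\<Sum>k<n. if k = j then 1 else 0)"
    using h by (intro sum.cong) (auto simp: gelt_def xgen_pm_eq_iff)
  then show ?thesis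
    using True h by simp
next
  case False
  then have "h \<noteq> xgen_pm e k" if "k < n" for e k
    using that unfolding gens_def by auto
  then show ?thesis
    using False by (simp add: gelt_def)
qed

lemma s_elt_eq:
  "s_elt n h = (if h \<in> gens n then complex_of_real (1 / sqrt (2 * n)) else 0)"
proof -
  have "(\<Sum>k<n. a_elt k h) = (if h \<in> gens n then 1 else 0) / complex_of_real (sqrt 2)"
    unfolding a_elt_def finv_xgen unfolding xgen_eq_xgen_pm sum_gelt_xgen_pm[symmetric]
    by (simp add: sum_divide_distrib)
  then show ?thesis
    by (simp add: s_elt_def real_sqrt_mult)
qed

definition oriented_pairs :: "nat \<Rightarrow> ((bool \<times> nat) \<times> (bool \<times> nat)) set" where
  "oriented_pairs n = {((e, j), (d, k)). j < n \<and> k < n \<and> j + (if e then 1 else 0) = k + (if d then 0 else 1)}"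

lemma oriented_pairs_eq:
  "oriented_pairs n =
    (\<lambda>j. ((True, j), (True, Suc j))) ` {..<n - 1} \<union> (\<lambda>j. ((True, j), (False, j))) ` {..<n} \<union>
    (\<lambda>j. ((False, j), (True, j))) ` {..<n} \<union> (\<lambda>k. ((False, Suc k), (False, k))) ` {..<n - 1}"
  unfolding oriented_pairs_def by (auto split: if_splits)

lemma card_oriented_pairs:
  assumes "n \<ge> 1"
  shows "card (oriented_pairs n) = 4 * n - 2"
proof -
  let ?A1 = "(\<lambda>j. ((True, j), (True, Suc j))) ` {..<n - 1}"
  let ?A2 = "(\<lambda>j. ((True, j), (False, j))) ` {..<n}"
  let ?A3 = "(\<lambda>j. ((False, j), (True, j))) ` {..<n}"
  let ?A4 = "(\<lambda>k. ((False, Suc k), (False, k))) ` {..<n - 1}"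
  have cards: "card ?A1 = n - 1" "card ?A2 = n" "card ?A3 = n" "card ?A4 = n - 1"
    by (simp_all add: card_image inj_on_def)
  have "card (?A1 \<union> ?A2 \<union> ?A3 \<union> ?A4) = card (?A1 \<union> ?A2 \<union> ?A3) + card ?A4"
    by (rule card_Un_disjoint) auto
  also have "card (?A1 \<union> ?A2 \<union> ?A3) = card (?A1 \<union> ?A2) + card ?A3"
    by (rule card_Un_disjoint) auto
  also have "card (?A1 \<union> ?A2) = card ?A1 + card ?A2"
    by (rule card_Un_disjoint) auto
  finally show ?thesis
    unfolding oriented_pairs_eq using assms cards by simp
qed

lemma card_oriented_products:
  "card {p \<in> gens n \<times> gens n. snd p \<circ> fst p \<in> orientedF} = card (oriented_pairs n)"
proof -
  define f where "f x = (xgen_pm (fst (fst x)) (snd (fst x)), xgen_pm (fst (snd x)) (snd (snd x)))" for x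
  have "{p \<in> gens n \<times> gens n. snd p \<circ> fst p \<in> orientedF} = f ` oriented_pairs n"
  proof (intro equalityI subsetI)
    fix p assume "p \<in> {p \<in> gens n \<times> gens n. snd p \<circ> fst p \<in> orientedF}"
    then obtain e j d k where "p = f ((e, j), (d, k))" "j < n" "k < n"
      "xgen_pm d k \<circ> xgen_pm e j \<in> orientedF"
      unfolding gens_def f_def by auto
    then show "p \<in> f ` oriented_pairs n"
      unfolding oriented_pairs_def xgen_pm_comp_orientedF_iff by blast
  next
    fix p assume "p \<in> f ` oriented_pairs n"
    then show "p \<in> {p \<in> gens n \<times> gens n. snd p \<circ> fst p \<in> orientedF}"
      unfolding oriented_pairs_def gens_def f_def by (force simp: xgen_pm_comp_orientedF_iff)
  qed
  moreover have "inj_on f (oriented_pairs n)"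
    by (auto simp: inj_on_def f_def xgen_pm_eq_iff)
  ultimately show ?thesis
    by (simp add: card_image)
qed

lemma theta_s_elt_square:
  assumes "n \<ge> 1"
  shows "theta (gmult (s_elt n) (s_elt n)) = 2 - 1 / of_nat n"
proof -
  have "complex_of_real (1 / sqrt (2 * n)) ^ 2 = complex_of_real ((1 / sqrt (2 * n)) ^ 2)"
    by (rule of_real_power[symmetric])
  also have "\<dots> = 1 / (2 * of_nat n)"
    by (simp add: power_divide)
  finally have "theta (gmult (s_elt n) (s_elt n)) = of_nat (4 * n - 2) * (1 / (2 * of_nat n))"
    using theta_gmult_indicator[OF s_elt_eq _ finite_gens, of n] assms
    by (simp add: card_oriented_products card_oriented_pairs)
  also have "\<dots> = 2 - 1 / of_nat n"
    using assms by (simp add: of_nat_diff field_simps)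
  finally show ?thesis .
qed

theorem mainTheorem13:
  shows "(\<forall>n::nat. n \<ge> 1 \<longrightarrow>
            2 * of_nat n * theta (gmult (s_elt n) (s_elt n)) = 4 * of_nat n - 2)
         \<and> (\<lambda>n. theta (gmult (s_elt n) (s_elt n))) \<longlonglongrightarrow> 2"
proof -
  have "eventually (\<lambda>n. theta (gmult (s_elt n) (s_elt n)) = 2 - 1 / of_nat n) sequentially"
    using eventually_ge_at_top[of 1] by (rule eventually_mono) (rule theta_s_elt_square)
  moreover have "(\<lambda>n. 2 - 1 / of_nat n :: complex) \<longlonglongrightarrow> 2"
    using tendsto_diff[OF tendsto_const lim_1_over_n, of "2 :: complex"] by simp
  ultimately have "(\<lambda>n. theta (gmult (s_elt n) (s_elt n))) \<longlonglongrightarrow> 2"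
    by (simp only: tendsto_cong)
  moreover have "2 * of_nat n * theta (gmult (s_elt n) (s_elt n)) = 4 * of_nat n - 2" if "n \<ge> 1" for n
    using that by (simp add: theta_s_elt_square right_diff_distrib)
  ultimately show ?thesis
    by blast
qed

end
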